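(* Let $\mathbf{A}\in\mathbb{R}^{r\times n}$ be a matrix whose nonzero entries are bounded in absolute value by $\mathrm{poly}(r)$ and all of whose subdeterminants are either zero or at least $\frac{1}{\mathrm{poly}(r)}$ in absolute value. Let $s\ge1$. Then there is a matrix $\mathbf{A}'\in\mathbb{R}^{r\times n}$, obtained from $\mathbf{A}$ by zeroing out at most $O(r^2s\log(nr))$ columns, such that every column of $\mathbf{A}'$ has leverage score at most $\frac1s$.
   Context: The leverage score of column $\mathbf{a}_i$ of a matrix $\mathbf{M}$ is $\ell_i=\max_{\mathbf{v}:\mathbf{M}^\top\mathbf{v}\neq0}\frac{\langle\mathbf{v},\mathbf{a}_i\rangle^2}{\|\mathbf{M}^\top\mathbf{v}\|_2^2}$ (equivalently $\mathbf{a}_i^\top(\mathbf{M}\mathbf{M}^\top)^{+}\mathbf{a}_i$). *)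

theory Defs
  imports "Jordan_Normal_Form.Matrix" "Jordan_Normal_Form.Determinant" "Jordan_Normal_Form.DL_Submatrix"
begin

definition leverage_score :: "real mat \<Rightarrow> nat \<Rightarrow> real" where
  "leverage_score M i =
     (if \<exists>v \<in> carrier_vec (dim_row M). transpose_mat M *\<^sub>v v \<noteq> 0\<^sub>v (dim_col M)
      then Sup {(v \<bullet> col M i)\<^sup>2 / ((transpose_mat M *\<^sub>v v) \<bullet> (transpose_mat M *\<^sub>v v)) | v.
                 v \<in> carrier_vec (dim_row M) \<and> transpose_mat M *\<^sub>v v \<noteq> 0\<^sub>v (dim_col M)}
      else 0)"

definition zero_cols :: "real mat \<Rightarrow> nat set \<Rightarrow> real mat" where
  "zero_cols A S = mat (dim_row A) (dim_col A) (\<lambda>(i,j). if j \<in> S then 0 else A $$ (i,j))"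

end

theory Submission
  imports Defs "HOL-Analysis.Convex"
begin

(*
  Repeatedly delete a column whose leverage within the surviving columns exceeds 1/s.
  Let k be the rank of the surviving columns and fix k rows carrying a nonzero k-minor on them.
  The potential, the sum of the squares of the k-minors in these rows over all k-tuples of
  surviving columns, is k! times the Gram determinant of the rows (Cauchy-Binet). Deleting a
  column of leverage above 1/s multiplies it by at most 1 - 1/s (matrix determinant lemma and
  Cauchy-Schwarz). The potential is at most (n r^2 p^2)^r when the entries are bounded by p,
  and at least 1/p^2 while positive when the nonzero minors are at least 1/p. So after
  O(s log (n r p)) deletions either all leverages are at most 1/s or the potential vanishes and
  the rank drops; the rank drops at most r times, and log p = O(log r).
*)

section \<open>Determinant identities\<close>

lemma det_permute_cols:
  assumes M: "(M :: 'a :: comm_ring_1 mat) \<in> carrier_mat n n" and p: "p permutes {0..<n}"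
  shows "det (mat n n (\<lambda>(i,j). M $$ (i, p j))) = signof p * det M"
proof -
  have MT: "transpose_mat M \<in> carrier_mat n n" using M by auto
  have "mat n n (\<lambda>(i,j). M $$ (i, p j)) = transpose_mat (mat n n (\<lambda>(i,j). transpose_mat M $$ (p i, j)))"
    using M p by (intro eq_matI) (auto simp: permutes_in_image)
  hence "det (mat n n (\<lambda>(i,j). M $$ (i, p j))) = det (mat n n (\<lambda>(i,j). transpose_mat M $$ (p i, j)))"
    by (metis det_transpose mat_carrier)
  also have "\<dots> = signof p * det M"
    using det_permute_rows[OF MT p] det_transpose[OF M] by simp
  finally show ?thesis .
qed

lemma abs_det_le_fact_mult_power:
  fixes M :: "'a :: linordered_idom mat"
  assumes M: "M \<in> carrier_mat m m" and bound: "\<And>i j. i < m \<Longrightarrow> j < m \<Longrightarrow> \<bar>M $$ (i,j)\<bar> \<le> b"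
  shows "\<bar>det M\<bar> \<le> fact m * b ^ m"
proof -
  let ?P = "{q. q permutes {0..<m}}"
  have "\<bar>det M\<bar> \<le> (\<Sum>q\<in>?P. \<bar>signof q * (\<Prod>i = 0..<m. M $$ (i, q i))\<bar>)"
    unfolding det_def'[OF M] by (rule sum_abs)
  also have "\<dots> \<le> (\<Sum>q\<in>?P. b ^ m)"
  proof (rule sum_mono)
    fix q assume "q \<in> ?P"
    hence "(\<Prod>i = 0..<m. \<bar>M $$ (i, q i)\<bar>) \<le> (\<Prod>i = 0..<m. b)"
      by (intro prod_mono) (auto simp: permutes_in_image bound)
    thus "\<bar>signof q * (\<Prod>i = 0..<m. M $$ (i, q i))\<bar> \<le> b ^ m"
      by (simp add: abs_mult abs_prod sign_def)
  qed
  also have "\<dots> = fact m * b ^ m"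
    by (simp add: card_permutations)
  finally show ?thesis .
qed

lemma sum_PiE_comp_permutes:
  assumes p: "p permutes {0..<k}"
  shows "(\<Sum>g\<in>{0..<k} \<rightarrow>\<^sub>E T. h g) = (\<Sum>g\<in>{0..<k} \<rightarrow>\<^sub>E T. h (g \<circ> p))"
proof -
  have comp_PiE: "g \<circ> q \<in> {0..<k} \<rightarrow>\<^sub>E T"
    if q: "q permutes {0..<k}" and g: "g \<in> {0..<k} \<rightarrow>\<^sub>E T" for q g
    using g permutes_in_image[OF q] permutes_not_in[OF q] by (auto simp: PiE_def extensional_def)
  have inv: "inv_into UNIV p permutes {0..<k}" using p by (rule permutes_inv)
  show ?thesis
    by (rule sum.reindex_bij_witness[of _ "\<lambda>g. g \<circ> p" "\<lambda>g. g \<circ> inv_into UNIV p"])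
      (use p inv comp_PiE in \<open>auto simp: comp_assoc permutes_inv_o\<close>)
qed

definition gram_mat :: "nat \<Rightarrow> (nat \<Rightarrow> nat \<Rightarrow> 'a :: comm_ring_1) \<Rightarrow> nat set \<Rightarrow> 'a mat" where
  "gram_mat k B T = mat k k (\<lambda>(a,b). \<Sum>t\<in>T. B a t * B b t)"

definition col_minor :: "nat \<Rightarrow> (nat \<Rightarrow> nat \<Rightarrow> 'a :: comm_ring_1) \<Rightarrow> (nat \<Rightarrow> nat) \<Rightarrow> 'a" where
  "col_minor k B g = det (mat k k (\<lambda>(a,b). B a (g b)))"

lemma col_minor_comp_permutes:
  assumes "p permutes {0..<k}"
  shows "col_minor k B (g \<circ> p) = signof p * col_minor k B g"
proof -
  have "mat k k (\<lambda>(a,b). B a ((g \<circ> p) b)) = mat k k (\<lambda>(a,b). mat k k (\<lambda>(a,b). B a (g b)) $$ (a, p b))"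
    using assms by (intro eq_matI) (auto simp: permutes_in_image)
  thus ?thesis
    unfolding col_minor_def comp_def by (simp add: det_permute_cols[OF mat_carrier assms])
qed

lemma det_gram_mat_expand:
  assumes T: "finite T"
  shows "det (gram_mat k B T) = (\<Sum>g\<in>{0..<k} \<rightarrow>\<^sub>E T. (\<Prod>a=0..<k. B a (g a)) * col_minor k B g)"
proof -
  let ?P = "{p. p permutes {0..<k}}"
  let ?F = "{0..<k} \<rightarrow>\<^sub>E T"
  have G: "gram_mat k B T \<in> carrier_mat k k" by (simp add: gram_mat_def)
  have minor_transposed: "col_minor k B g = (\<Sum>p\<in>?P. signof p * (\<Prod>a=0..<k. B (p a) (g a)))" for g
  proof -
    have "col_minor k B g = det (transpose_mat (mat k k (\<lambda>(a,b). B a (g b))))"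
      by (simp add: col_minor_def det_transpose[OF mat_carrier])
    also have "\<dots> = (\<Sum>p\<in>?P. signof p * (\<Prod>a=0..<k. B (p a) (g a)))"
      by (subst det_def'[of _ k]) (auto intro!: sum.cong arg_cong2[where f="(*)"] prod.cong simp: permutes_in_image)
    finally show ?thesis .
  qed
  have "det (gram_mat k B T) = (\<Sum>p\<in>?P. signof p * (\<Prod>a=0..<k. \<Sum>t\<in>T. B a t * B (p a) t))"
    unfolding det_def'[OF G]
    by (intro sum.cong refl arg_cong2[where f="(*)"] prod.cong) (auto simp: gram_mat_def permutes_in_image)
  also have "\<dots> = (\<Sum>p\<in>?P. \<Sum>g\<in>?F. (\<Prod>a=0..<k. B a (g a)) * (signof p * (\<Prod>a=0..<k. B (p a) (g a))))"
    using T by (simp add: prod_sum_PiE sum_distrib_left prod.distrib algebra_simps)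
  also have "\<dots> = (\<Sum>g\<in>?F. (\<Prod>a=0..<k. B a (g a)) * col_minor k B g)"
    by (subst sum.swap) (simp add: minor_transposed sum_distrib_left)
  finally show ?thesis .
qed

text \<open>Cauchy--Binet for a Gram matrix, summing over all column maps rather than the increasing
  injective ones, whence the factor \<open>k!\<close>.\<close>
lemma fact_mult_det_gram_mat:
  assumes T: "finite T"
  shows "fact k * det (gram_mat k B T) = (\<Sum>g\<in>{0..<k} \<rightarrow>\<^sub>E T. (col_minor k B g)\<^sup>2)"
proof -
  let ?P = "{p. p permutes {0..<k}}"
  let ?F = "{0..<k} \<rightarrow>\<^sub>E T"
  have symmetrized: "det (gram_mat k B T) =
      (\<Sum>g\<in>?F. signof p * (\<Prod>a=0..<k. B a (g (p a))) * col_minor k B g)" if p: "p \<in> ?P" for p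
  proof -
    have "det (gram_mat k B T) = (\<Sum>g\<in>?F. (\<Prod>a=0..<k. B a ((g \<circ> p) a)) * col_minor k B (g \<circ> p))"
      unfolding det_gram_mat_expand[OF T] using p by (intro sum_PiE_comp_permutes) simp
    also have "\<dots> = (\<Sum>g\<in>?F. signof p * (\<Prod>a=0..<k. B a (g (p a))) * col_minor k B g)"
      using p by (simp add: col_minor_comp_permutes mult_ac)
    finally show ?thesis .
  qed
  have "fact k * det (gram_mat k B T) = (\<Sum>p\<in>?P. det (gram_mat k B T))"
    by (simp add: card_permutations)
  also have "\<dots> = (\<Sum>p\<in>?P. \<Sum>g\<in>?F. signof p * (\<Prod>a=0..<k. B a (g (p a))) * col_minor k B g)"
    by (rule sum.cong[OF refl]) (rule symmetrized)
  also have "\<dots> = (\<Sum>g\<in>?F. col_minor k B g * (\<Sum>p\<in>?P. signof p * (\<Prod>a=0..<k. B a (g (p a)))))"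
    by (subst sum.swap) (simp add: sum_distrib_left mult_ac)
  also have "\<dots> = (\<Sum>g\<in>?F. (col_minor k B g)\<^sup>2)"
    by (intro sum.cong refl)
      (auto simp: col_minor_def det_def'[of _ k] power2_eq_square permutes_in_image intro!: sum.cong prod.cong)
  finally show ?thesis .
qed

definition border_mat :: "nat \<Rightarrow> 'a :: comm_ring_1 mat \<Rightarrow> (nat \<Rightarrow> 'a) \<Rightarrow> (nat \<Rightarrow> 'a) \<Rightarrow> 'a mat" where
  "border_mat k M x y = mat (Suc k) (Suc k)
     (\<lambda>(a,b). if a < k \<and> b < k then M $$ (a,b) else if a < k then x a else if b < k then y b else 1)"

lemma det_border_mat_eq_det_rank_one_update:
  fixes M :: "'a :: comm_ring_1 mat"
  assumes M: "M \<in> carrier_mat k k"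
  shows "det (border_mat k M x y) = det (mat k k (\<lambda>(a,b). M $$ (a,b) - x a * y b))"
proof -
  define E where "E = mat (Suc k) (Suc k) (\<lambda>(a,b). if a = b then 1 else if a < k \<and> b = k then - x a else 0)"
  define Y where "Y = mat (Suc k) (Suc k)
     (\<lambda>(a,b). if a < k \<and> b < k then M $$ (a,b) - x a * y b else if a < k then 0 else if b < k then y b else 1)"
  have E: "E \<in> carrier_mat (Suc k) (Suc k)" and X: "border_mat k M x y \<in> carrier_mat (Suc k) (Suc k)"
    and Y: "Y \<in> carrier_mat (Suc k) (Suc k)" by (auto simp: E_def Y_def border_mat_def)
  have "E * border_mat k M x y = Y"
  proof (rule eq_matI)
    fix a b assume "a < dim_row Y" "b < dim_col Y"
    hence a: "a < Suc k" and b: "b < Suc k" by (auto simp: Y_def)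
    have "(E * border_mat k M x y) $$ (a,b) = (\<Sum>z<Suc k. E $$ (a,z) * border_mat k M x y $$ (z,b))"
      using a b E X by (auto simp: scalar_prod_def atLeast0LessThan intro!: sum.cong)
    also have "\<dots> = (\<Sum>z<k. E $$ (a,z) * border_mat k M x y $$ (z,b)) + E $$ (a,k) * border_mat k M x y $$ (k,b)"
      by simp
    also have "(\<Sum>z<k. E $$ (a,z) * border_mat k M x y $$ (z,b)) = (\<Sum>z<k. if z = a then border_mat k M x y $$ (a,b) else 0)"
      using a by (intro sum.cong refl) (auto simp: E_def)
    finally show "(E * border_mat k M x y) $$ (a,b) = Y $$ (a,b)"
      using a b by (auto simp: E_def Y_def border_mat_def)
  qed (auto simp: E_def Y_def border_mat_def)
  moreover have "det E = 1"
  proof -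
    have "upper_triangular E" by (auto simp: upper_triangular_def E_def)
    hence "det E = prod_list (diag_mat E)" using det_upper_triangular E by blast
    moreover have "diag_mat E = replicate (Suc k) 1"
      by (intro nth_equalityI) (auto simp: diag_mat_def E_def simp del: upt_Suc replicate_Suc)
    ultimately show ?thesis by simp
  qed
  moreover have "det Y = det (mat k k (\<lambda>(a,b). M $$ (a,b) - x a * y b))"
  proof -
    have "det Y = (\<Sum>i<Suc k. Y $$ (i,k) * cofactor Y i k)"
      by (rule laplace_expansion_column[OF Y]) simp
    also have "\<dots> = det (mat_delete Y k k)" by (simp add: Y_def cofactor_def)
    also have "mat_delete Y k k = mat k k (\<lambda>(a,b). M $$ (a,b) - x a * y b)"
      by (intro eq_matI) (auto simp: mat_delete_def Y_def)
    finally show ?thesis .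
  qed
  ultimately show ?thesis using det_mult[OF E X] by simp
qed

lemma cofactor_border_mat_last_row:
  fixes M :: "'a :: comm_ring_1 mat"
  assumes M: "M \<in> carrier_mat k k" and c: "c < k"
  shows "cofactor (border_mat k M x y) k c = - (\<Sum>l<k. x l * cofactor M l c)"
proof -
  obtain k' where k: "k = Suc k'" using c by (cases k) auto
  define Z where "Z = mat_delete (border_mat k M x y) k c"
  have Z: "Z \<in> carrier_mat k k" by (simp add: Z_def mat_delete_def border_mat_def)
  have "det Z = (\<Sum>l<k. Z $$ (l,k') * cofactor Z l k')"
    by (rule laplace_expansion_column[OF Z]) (simp add: k)
  also have "\<dots> = (\<Sum>l<k. x l * ((-1)^(l+k') * det (mat_delete M l c)))"
  proof (intro sum.cong refl arg_cong2[where f="(*)"])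
    fix l assume l: "l \<in> {..<k}"
    show "Z $$ (l,k') = x l" using l c by (auto simp: Z_def mat_delete_def border_mat_def k)
    have "mat_delete Z l k' = mat_delete M l c"
      using l c M by (intro eq_matI) (auto simp: Z_def mat_delete_def border_mat_def k)
    thus "cofactor Z l k' = (-1)^(l+k') * det (mat_delete M l c)" by (simp add: cofactor_def)
  qed
  finally have "cofactor (border_mat k M x y) k c =
      (\<Sum>l<k. x l * ((-1)^(k+c) * (-1)^(l+k') * det (mat_delete M l c)))"
    by (simp add: cofactor_def Z_def sum_distrib_left mult_ac)
  also have "\<dots> = (\<Sum>l<k. - (x l * cofactor M l c))"
  proof (intro sum.cong refl)
    fix l
    have "((-1)^(k+c) * (-1)^(l+k') :: 'a) = - ((-1)^(l+c)) * ((-1)^k' * (-1)^k')"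
      by (simp add: k power_add mult_ac)
    also have "\<dots> = - ((-1)^(l+c))" by (simp flip: power_add mult_2)
    finally show "x l * ((-1)^(k+c) * (-1)^(l+k') * det (mat_delete M l c)) = - (x l * cofactor M l c)"
      by (simp add: cofactor_def)
  qed
  finally show ?thesis by (simp add: sum_negf)
qed

lemma det_border_mat:
  fixes M :: "'a :: comm_ring_1 mat"
  assumes M: "M \<in> carrier_mat k k"
  shows "det (border_mat k M x y) = det M - (\<Sum>l<k. \<Sum>c<k. x l * y c * cofactor M l c)"
proof -
  let ?X = "border_mat k M x y"
  have X: "?X \<in> carrier_mat (Suc k) (Suc k)" by (simp add: border_mat_def)
  have "det ?X = (\<Sum>c<Suc k. ?X $$ (k,c) * cofactor ?X k c)"
    by (rule laplace_expansion_row[OF X]) simp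
  also have "\<dots> = (\<Sum>c<k. y c * cofactor ?X k c) + cofactor ?X k k"
    by (simp add: border_mat_def)
  also have "cofactor ?X k k = det M"
  proof -
    have "mat_delete ?X k k = M" using M by (intro eq_matI) (auto simp: mat_delete_def border_mat_def)
    thus ?thesis by (simp add: cofactor_def)
  qed
  also have "(\<Sum>c<k. y c * cofactor ?X k c) = - (\<Sum>c<k. \<Sum>l<k. x l * y c * cofactor M l c)"
    by (simp add: cofactor_border_mat_last_row[OF M] sum_distrib_left sum_negf mult_ac)
  finally show ?thesis by (subst sum.swap) simp
qed

text \<open>The matrix determinant lemma in adjugate form, valid also for singular \<open>M\<close>.\<close>
lemma det_rank_one_update:
  fixes M :: "'a :: comm_ring_1 mat"
  assumes "M \<in> carrier_mat k k"
  shows "det (mat k k (\<lambda>(a,b). M $$ (a,b) - x a * y b)) = det M - (\<Sum>l<k. \<Sum>c<k. x l * y c * cofactor M l c)"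
  using det_border_mat[OF assms] det_border_mat_eq_det_rank_one_update[OF assms] by simp

lemma sum_mult_adj_mat_vec:
  fixes G :: "'a :: comm_ring_1 mat"
  assumes G: "G \<in> carrier_mat k k" and a: "a < k"
  shows "(\<Sum>b<k. G $$ (a,b) * (\<Sum>c<k. cofactor G c b * x c)) = det G * x a"
proof -
  have cofactor_row: "(\<Sum>b<k. G $$ (a,b) * cofactor G c b) = (if a = c then det G else 0)"
    if c: "c < k" for c
  proof -
    have "(\<Sum>b<k. G $$ (a,b) * cofactor G c b) = (G * adj_mat G) $$ (a,c)"
      using G a c by (auto simp: scalar_prod_def adj_mat_def atLeast0LessThan intro!: sum.cong)
    also have "\<dots> = (if a = c then det G else 0)" using adj_mat(2)[OF G] a c by simp
    finally show ?thesis .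
  qed
  have "(\<Sum>b<k. G $$ (a,b) * (\<Sum>c<k. cofactor G c b * x c)) =
      (\<Sum>c<k. x c * (\<Sum>b<k. G $$ (a,b) * cofactor G c b))"
    by (simp add: sum_distrib_left mult_ac) (rule sum.swap)
  also have "\<dots> = (\<Sum>c<k. x c * (if a = c then det G else 0))"
    by (intro sum.cong refl) (simp add: cofactor_row)
  also have "\<dots> = det G * x a" using a by (simp add: if_distrib sum.delta cong: if_cong)
  finally show ?thesis .
qed

lemma gram_mat_bilinear:
  "(\<Sum>t\<in>T. (\<Sum>l<k. y l * B l t) * (\<Sum>a<k. z a * B a t)) =
   (\<Sum>l<k. \<Sum>a<k. y l * gram_mat k B T $$ (l,a) * z a)"
proof -
  have "(\<Sum>t\<in>T. (\<Sum>l<k. y l * B l t) * (\<Sum>a<k. z a * B a t)) =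
        (\<Sum>t\<in>T. \<Sum>l<k. \<Sum>a<k. y l * (B l t * B a t) * z a)"
    by (simp add: sum_product mult_ac)
  also have "\<dots> = (\<Sum>l<k. \<Sum>a<k. \<Sum>t\<in>T. y l * (B l t * B a t) * z a)"
    by (subst sum.swap) (simp add: sum.swap[of _ T])
  also have "\<dots> = (\<Sum>l<k. \<Sum>a<k. y l * gram_mat k B T $$ (l,a) * z a)"
    by (simp add: gram_mat_def sum_distrib_left sum_distrib_right)
  finally show ?thesis .
qed

lemma det_gram_mat_Diff_singleton:
  assumes "finite T" "j \<in> T"
  shows "det (gram_mat k B (T - {j})) =
    det (gram_mat k B T) - (\<Sum>l<k. \<Sum>c<k. B l j * B c j * cofactor (gram_mat k B T) l c)"
proof -
  have G: "gram_mat k B T \<in> carrier_mat k k" by (simp add: gram_mat_def)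
  have "gram_mat k B (T - {j}) = mat k k (\<lambda>(a,b). gram_mat k B T $$ (a,b) - B a j * B b j)"
    using assms by (intro eq_matI) (auto simp: gram_mat_def sum.remove)
  thus ?thesis using det_rank_one_update[OF G] by simp
qed

text \<open>Cauchy--Schwarz for \<open>u\<close> and \<open>w = adj G x\<close> in the semi-inner product given by \<open>G\<close>,
  using \<open>G w = det G \<cdot> x\<close>.\<close>
lemma gram_mat_cauchy_schwarz_adj:
  fixes B :: "nat \<Rightarrow> nat \<Rightarrow> real" and k :: nat and T :: "nat set"
  defines "G \<equiv> gram_mat k B T"
  shows "(det G * (\<Sum>l<k. u l * x l))\<^sup>2 \<le>
    (\<Sum>t\<in>T. (\<Sum>l<k. u l * B l t)\<^sup>2) * (det G * (\<Sum>l<k. \<Sum>c<k. x l * x c * cofactor G l c))"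
proof -
  define w where "w a = (\<Sum>c<k. cofactor G c a * x c)" for a
  have G: "G \<in> carrier_mat k k" by (simp add: G_def gram_mat_def)
  have form_w: "(\<Sum>t\<in>T. (\<Sum>l<k. y l * B l t) * (\<Sum>a<k. w a * B a t)) = det G * (\<Sum>l<k. y l * x l)" for y
  proof -
    have "(\<Sum>t\<in>T. (\<Sum>l<k. y l * B l t) * (\<Sum>a<k. w a * B a t)) = (\<Sum>l<k. y l * (\<Sum>a<k. G $$ (l,a) * w a))"
      unfolding gram_mat_bilinear G_def by (simp add: sum_distrib_left mult_ac)
    also have "\<dots> = (\<Sum>l<k. y l * (det G * x l))"
      by (intro sum.cong refl) (simp add: w_def sum_mult_adj_mat_vec[OF G])
    also have "\<dots> = det G * (\<Sum>l<k. y l * x l)"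
      by (simp add: sum_distrib_left mult_ac)
    finally show ?thesis .
  qed
  have "(\<Sum>l<k. w l * x l) = (\<Sum>l<k. \<Sum>c<k. x c * x l * cofactor G c l)"
    by (simp add: w_def sum_distrib_left sum_distrib_right mult_ac)
  also have "\<dots> = (\<Sum>l<k. \<Sum>c<k. x l * x c * cofactor G l c)" by (rule sum.swap)
  finally have "(\<Sum>t\<in>T. (\<Sum>a<k. w a * B a t)\<^sup>2) = det G * (\<Sum>l<k. \<Sum>c<k. x l * x c * cofactor G l c)"
    using form_w[of w] by (simp add: power2_eq_square)
  thus ?thesis
    using Cauchy_Schwarz_ineq_sum[of "\<lambda>t. \<Sum>l<k. u l * B l t" "\<lambda>t. \<Sum>a<k. w a * B a t" T]
    by (simp add: form_w)
qed

lemma det_gram_mat_remove_col_le: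
  fixes B :: "nat \<Rightarrow> nat \<Rightarrow> real"
  assumes T: "finite T" and j: "j \<in> T" and pos: "det (gram_mat k B T) > 0" and s: "s > 0"
    and high: "(\<Sum>t\<in>T. (\<Sum>l<k. u l * B l t)\<^sup>2) < s * (\<Sum>l<k. u l * B l j)\<^sup>2"
  shows "det (gram_mat k B (T - {j})) \<le> (1 - 1/s) * det (gram_mat k B T)"
proof -
  define G where "G = gram_mat k B T"
  define \<beta> where "\<beta> = (\<Sum>l<k. \<Sum>c<k. B l j * B c j * cofactor G l c)"
  define Q where "Q = (\<Sum>t\<in>T. (\<Sum>l<k. u l * B l t)\<^sup>2)"
  define uj where "uj = (\<Sum>l<k. u l * B l j)"
  have "(det G * uj)\<^sup>2 \<le> Q * (det G * \<beta>)"
    unfolding G_def \<beta>_def Q_def uj_def by (rule gram_mat_cauchy_schwarz_adj)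
  hence CS: "det G * uj\<^sup>2 \<le> Q * \<beta>"
    using pos by (simp add: G_def power_mult_distrib power2_eq_square mult_ac)
  have "uj\<^sup>2 \<le> Q" unfolding Q_def uj_def by (rule member_le_sum[OF j]) (auto simp: T)
  moreover have high': "Q < s * uj\<^sup>2" using high by (simp add: Q_def uj_def)
  moreover have "Q \<ge> 0" unfolding Q_def by (intro sum_nonneg) auto
  ultimately have "Q > 0" using antisym[OF _ zero_le_power2, of uj] by (cases "Q = 0") auto
  have "Q * det G < s * uj\<^sup>2 * det G" using high' pos by (simp add: G_def)
  also have "\<dots> \<le> s * (Q * \<beta>)" using CS s by (simp add: mult_ac)
  finally have "Q * det G < Q * (s * \<beta>)" by (simp add: mult_ac)
  hence "det G < s * \<beta>" using \<open>Q > 0\<close> by simp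
  hence "det G - \<beta> \<le> (1 - 1/s) * det G" using s by (simp add: field_simps)
  thus ?thesis unfolding det_gram_mat_Diff_singleton[OF T j] by (simp add: G_def \<beta>_def)
qed

section \<open>Minors and rank\<close>

definition minor :: "'a :: comm_ring_1 mat \<Rightarrow> nat \<Rightarrow> (nat \<Rightarrow> nat) \<Rightarrow> (nat \<Rightarrow> nat) \<Rightarrow> 'a" where
  "minor A k f g = det (mat k k (\<lambda>(x,y). A $$ (f x, g y)))"

lemma minor_cong:
  assumes "\<And>x. x < k \<Longrightarrow> f x = f' x" "\<And>x. x < k \<Longrightarrow> g x = g' x"
  shows "minor A k f g = minor A k f' g'"
proof -
  have "mat k k (\<lambda>(x,y). A $$ (f x, g y)) = mat k k (\<lambda>(x,y). A $$ (f' x, g' y))"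
    using assms by (intro eq_matI) auto
  thus ?thesis by (simp add: minor_def)
qed

lemma minor_nonzero_imp_inj:
  assumes "minor A k f g \<noteq> 0"
  shows "inj_on f {0..<k}" and "inj_on g {0..<k}"
proof -
  show "inj_on f {0..<k}"
  proof (rule inj_onI, rule ccontr)
    fix x y assume "x \<in> {0..<k}" "y \<in> {0..<k}" "f x = f y" "x \<noteq> y"
    hence "minor A k f g = 0" unfolding minor_def
      by (intro det_identical_rows[of _ k x y]) (auto intro!: eq_vecI)
    thus False using assms by contradiction
  qed
  show "inj_on g {0..<k}"
  proof (rule inj_onI, rule ccontr)
    fix x y assume "x \<in> {0..<k}" "y \<in> {0..<k}" "g x = g y" "x \<noteq> y"
    hence "minor A k f g = 0" unfolding minor_def
      by (intro det_identical_columns[of _ k x y]) (auto intro!: eq_vecI)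
    thus False using assms by contradiction
  qed
qed

lemma inj_on_obtain_permutes_pick:
  assumes inj: "inj_on f {0..<m}"
  obtains q where "q permutes {0..<m}" "\<And>x. x < m \<Longrightarrow> f x = pick (f ` {0..<m}) (q x)"
proof -
  define I where "I = f ` {0..<m}"
  define q where "q x = (if x < m then card {a\<in>I. a < f x} else x)" for x
  have pick_q: "pick I (q x) = f x" if "x < m" for x
    using that pick_card_in_set[of "f x" I] by (simp add: q_def I_def)
  have "q x < m" if x: "x < m" for x
  proof -
    have "{a\<in>I. a < f x} \<subset> I" using x by (auto simp: I_def)
    hence "card {a\<in>I. a < f x} < card I" by (rule psubset_card_mono[rotated]) (simp add: I_def)
    thus ?thesis using x inj by (simp add: q_def I_def card_image)
  qed
  moreover have "inj_on q {0..<m}"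
    by (rule inj_onI) (metis atLeastLessThan_iff pick_q inj inj_on_eq_iff)
  ultimately have "bij_betw q {0..<m} {0..<m}"
    by (simp add: bij_betw_def endo_inj_surj image_subset_iff)
  hence "q permutes {0..<m}" by (rule bij_imp_permutes) (simp add: q_def)
  thus ?thesis using that pick_q by (auto simp: I_def)
qed

lemma abs_minor_eq_abs_det_submatrix:
  fixes A :: "'a :: linordered_idom mat"
  assumes A: "A \<in> carrier_mat r n" and fi: "inj_on f {0..<m}" and gi: "inj_on g {0..<m}"
    and fr: "\<forall>x<m. f x < r" and gn: "\<forall>x<m. g x < n"
  shows "\<bar>minor A m f g\<bar> = \<bar>det (submatrix A (f ` {0..<m}) (g ` {0..<m}))\<bar>"
proof -
  define I where "I = f ` {0..<m}"
  define J where "J = g ` {0..<m}"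
  obtain p where p: "p permutes {0..<m}" and fp: "\<And>x. x < m \<Longrightarrow> f x = pick I (p x)"
    using inj_on_obtain_permutes_pick[OF fi] unfolding I_def by blast
  obtain q where q: "q permutes {0..<m}" and gq: "\<And>x. x < m \<Longrightarrow> g x = pick J (q x)"
    using inj_on_obtain_permutes_pick[OF gi] unfolding J_def by blast
  have rows: "{i. i < dim_row A \<and> i \<in> I} = I" and cols: "{j. j < dim_col A \<and> j \<in> J} = J"
    using A fr gn by (auto simp: I_def J_def)
  have "card I = m" "card J = m" using fi gi by (simp_all add: I_def J_def card_image)
  hence S: "submatrix A I J \<in> carrier_mat m m"
    and S_index: "\<And>a b. a < m \<Longrightarrow> b < m \<Longrightarrow> submatrix A I J $$ (a,b) = A $$ (pick I a, pick J b)"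
    using rows cols by (simp_all add: submatrix_def)
  define S' where "S' = mat m m (\<lambda>(x,y). submatrix A I J $$ (x, q y))"
  have "mat m m (\<lambda>(x,y). A $$ (f x, g y)) = mat m m (\<lambda>(x,y). S' $$ (p x, y))"
    using p q by (intro eq_matI) (auto simp: S'_def S_index fp gq permutes_in_image)
  hence "minor A m f g = signof p * det S'"
    using det_permute_rows[OF _ p, of S'] by (simp add: minor_def S'_def)
  also have "det S' = signof q * det (submatrix A I J)"
    unfolding S'_def by (rule det_permute_cols[OF S q])
  finally show ?thesis by (simp add: abs_mult sign_def I_def J_def)
qed

text \<open>The columns \<open>T\<close> of the first \<open>r\<close> rows have rank less than \<open>m\<close>.\<close>
definition minors_vanish :: "'a :: comm_ring_1 mat \<Rightarrow> nat \<Rightarrow> nat set \<Rightarrow> nat \<Rightarrow> bool" where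
  "minors_vanish A r T m \<longleftrightarrow> (\<forall>f g. (\<forall>x<m. f x < r) \<longrightarrow> (\<forall>x<m. g x \<in> T) \<longrightarrow> minor A m f g = 0)"

lemma minors_vanish_subset: "minors_vanish A r T m \<Longrightarrow> T' \<subseteq> T \<Longrightarrow> minors_vanish A r T' m"
  unfolding minors_vanish_def by blast

lemma minors_vanish_Suc_rows: "minors_vanish A r T (Suc r)"
  unfolding minors_vanish_def
proof (intro allI impI)
  fix f g :: "nat \<Rightarrow> nat" assume f: "\<forall>x<Suc r. f x < r"
  have "\<not> inj_on f {0..<Suc r}"
  proof
    assume "inj_on f {0..<Suc r}"
    moreover have "f ` {0..<Suc r} \<subseteq> {..<r}" using f by auto
    ultimately show False using card_mono[of "{..<r}" "f ` {0..<Suc r}"] by (simp add: card_image)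
  qed
  thus "minor A (Suc r) f g = 0" using minor_nonzero_imp_inj(1) by blast
qed

lemma minors_vanish_1_imp_zero:
  assumes "minors_vanish A r T 1" and "i < r" and "t \<in> T"
  shows "A $$ (i,t) = 0"
proof -
  have "minor A 1 (\<lambda>_. i) (\<lambda>_. t) = 0" using assms unfolding minors_vanish_def by simp
  thus ?thesis unfolding minor_def by (subst (asm) det_single) auto
qed

lemma minor_Suc_fun_upd:
  "minor A (Suc k) (f(k:=i)) (g(k:=t)) =
    (\<Sum>l<k. (-1)^(l+k) * minor A k (\<lambda>a. (f(k:=i)) (if a < l then a else Suc a)) g * A $$ (f l, t))
    + A $$ (i,t) * minor A k f g"
proof -
  define N where "N = mat (Suc k) (Suc k) (\<lambda>(a,b). A $$ ((f(k:=i)) a, (g(k:=t)) b))"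
  have N: "N \<in> carrier_mat (Suc k) (Suc k)" by (simp add: N_def)
  have "minor A (Suc k) (f(k:=i)) (g(k:=t)) = det N" by (simp add: N_def minor_def)
  also have "\<dots> = (\<Sum>l<Suc k. N $$ (l,k) * cofactor N l k)"
    by (rule laplace_expansion_column[OF N]) simp
  also have "\<dots> = (\<Sum>l<k. N $$ (l,k) * cofactor N l k) + N $$ (k,k) * cofactor N k k"
    by simp
  also have "(\<Sum>l<k. N $$ (l,k) * cofactor N l k) =
      (\<Sum>l<k. (-1)^(l+k) * minor A k (\<lambda>a. (f(k:=i)) (if a < l then a else Suc a)) g * A $$ (f l, t))"
  proof (intro sum.cong refl)
    fix l assume "l \<in> {..<k}"
    moreover have "mat_delete N l k =
        mat k k (\<lambda>(a,b). A $$ ((f(k:=i)) (if a < l then a else Suc a), g b))"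
      by (intro eq_matI) (auto simp: mat_delete_def N_def)
    ultimately show "N $$ (l,k) * cofactor N l k =
        (-1)^(l+k) * minor A k (\<lambda>a. (f(k:=i)) (if a < l then a else Suc a)) g * A $$ (f l, t)"
      by (simp add: N_def cofactor_def minor_def mult_ac)
  qed
  also have "N $$ (k,k) * cofactor N k k = A $$ (i,t) * minor A k f g"
  proof -
    have "mat_delete N k k = mat k k (\<lambda>(x,y). A $$ (f x, g y))"
      by (intro eq_matI) (auto simp: mat_delete_def N_def)
    thus ?thesis by (simp add: N_def cofactor_def minor_def flip: mult_2)
  qed
  finally show ?thesis .
qed

text \<open>Expanding the vanishing \<open>(k+1)\<close>-minor with rows \<open>f0, i\<close> and columns \<open>g0, t\<close> along its
  last column expresses row \<open>i\<close> through the rows \<open>f0\<close>, with coefficients independent of \<open>t\<close>.\<close>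
lemma rows_in_span_of_rows:
  fixes A :: "'a :: field mat"
  assumes V: "minors_vanish A r T (Suc k)" and f0: "\<forall>x<k. f0 x < r" and g0: "\<forall>x<k. g0 x \<in> T"
    and D: "minor A k f0 g0 \<noteq> 0"
  shows "\<exists>U. \<forall>i<r. \<forall>t\<in>T. A $$ (i,t) = (\<Sum>l<k. U i l * A $$ (f0 l, t))"
proof -
  define c where "c i l = (-1)^(l+k) * minor A k (\<lambda>a. (f0(k:=i)) (if a < l then a else Suc a)) g0" for i l
  have "A $$ (i,t) = (\<Sum>l<k. (- c i l / minor A k f0 g0) * A $$ (f0 l, t))" if i: "i < r" and t: "t \<in> T" for i t
  proof -
    have "minor A (Suc k) (f0(k:=i)) (g0(k:=t)) = 0"
      using V f0 g0 i t unfolding minors_vanish_def by (simp add: less_Suc_eq)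
    hence "(\<Sum>l<k. c i l * A $$ (f0 l, t)) + A $$ (i,t) * minor A k f0 g0 = 0"
      by (simp only: minor_Suc_fun_upd c_def)
    hence "A $$ (i,t) * minor A k f0 g0 = - (\<Sum>l<k. c i l * A $$ (f0 l, t))"
      by (simp only: add_eq_0_iff)
    hence "A $$ (i,t) = - (\<Sum>l<k. c i l * A $$ (f0 l, t)) / minor A k f0 g0"
      using D by (metis nonzero_mult_div_cancel_right)
    thus ?thesis by (simp add: sum_divide_distrib sum_negf)
  qed
  thus ?thesis by (intro exI[of _ "\<lambda>i l. - c i l / minor A k f0 g0"]) blast
qed

lemma row_comb_in_span_of_rows:
  fixes A :: "'a :: field mat"
  assumes V: "minors_vanish A r T (Suc k)" and f0: "\<forall>x<k. f0 x < r" and g0: "\<forall>x<k. g0 x \<in> T"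
    and D: "minor A k f0 g0 \<noteq> 0"
  shows "\<exists>u. \<forall>t\<in>T. (\<Sum>i<r. v i * A $$ (i,t)) = (\<Sum>l<k. u l * A $$ (f0 l, t))"
proof -
  obtain U where U: "\<forall>i<r. \<forall>t\<in>T. A $$ (i,t) = (\<Sum>l<k. U i l * A $$ (f0 l, t))"
    using rows_in_span_of_rows[OF V f0 g0 D] by blast
  have "(\<Sum>i<r. v i * A $$ (i,t)) = (\<Sum>l<k. (\<Sum>i<r. v i * U i l) * A $$ (f0 l, t))" if t: "t \<in> T" for t
  proof -
    have "(\<Sum>i<r. v i * A $$ (i,t)) = (\<Sum>i<r. \<Sum>l<k. v i * U i l * A $$ (f0 l, t))"
      using U t by (simp add: sum_distrib_left mult.assoc)
    also have "\<dots> = (\<Sum>l<k. (\<Sum>i<r. v i * U i l) * A $$ (f0 l, t))"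
      by (subst sum.swap) (simp add: sum_distrib_right)
    finally show ?thesis .
  qed
  thus ?thesis by (intro exI[of _ "\<lambda>l. \<Sum>i<r. v i * U i l"]) blast
qed

text \<open>By \<open>rows_in_span_of_rows\<close>, every \<open>k \<times> k\<close> submatrix on the columns \<open>T'\<close> factors through
  the one in the rows \<open>f0\<close>.\<close>
lemma minors_vanish_if_row_minors_vanish:
  fixes A :: "'a :: field mat"
  assumes V: "minors_vanish A r T (Suc k)" and f0: "\<forall>x<k. f0 x < r" and g0: "\<forall>x<k. g0 x \<in> T"
    and D: "minor A k f0 g0 \<noteq> 0" and sub: "T' \<subseteq> T"
    and zero: "\<And>g. \<forall>x<k. g x \<in> T' \<Longrightarrow> minor A k f0 g = 0"
  shows "minors_vanish A r T' k"
  unfolding minors_vanish_def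
proof (intro allI impI)
  fix f g assume f: "\<forall>x<k. f x < r" and g: "\<forall>x<k. g x \<in> T'"
  obtain U where U: "\<forall>i<r. \<forall>t\<in>T. A $$ (i,t) = (\<Sum>l<k. U i l * A $$ (f0 l, t))"
    using rows_in_span_of_rows[OF V f0 g0 D] by blast
  define L where "L = mat k k (\<lambda>(a,l). U (f a) l)"
  have "mat k k (\<lambda>(x,y). A $$ (f x, g y)) = L * mat k k (\<lambda>(x,y). A $$ (f0 x, g y))"
  proof (rule eq_matI)
    fix a b assume "a < dim_row (L * mat k k (\<lambda>(x,y). A $$ (f0 x, g y)))"
      "b < dim_col (L * mat k k (\<lambda>(x,y). A $$ (f0 x, g y)))"
    hence a: "a < k" and b: "b < k" by (auto simp: L_def)
    have "g b \<in> T" using g b sub by auto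
    thus "mat k k (\<lambda>(x,y). A $$ (f x, g y)) $$ (a,b) = (L * mat k k (\<lambda>(x,y). A $$ (f0 x, g y))) $$ (a,b)"
      using U f a b by (simp add: L_def scalar_prod_def atLeast0LessThan)
  qed (auto simp: L_def)
  hence "minor A k f g = det L * minor A k f0 g"
    unfolding minor_def by (simp add: det_mult[of _ k] L_def)
  thus "minor A k f g = 0" using zero[OF g] by simp
qed

section \<open>The potential\<close>

definition potential :: "real mat \<Rightarrow> nat \<Rightarrow> (nat \<Rightarrow> nat) \<Rightarrow> nat set \<Rightarrow> real" where
  "potential A k f T = (\<Sum>g\<in>{0..<k} \<rightarrow>\<^sub>E T. (minor A k f g)\<^sup>2)"

lemma potential_eq_fact_mult_det_gram_mat:
  "finite T \<Longrightarrow> potential A k f T = fact k * det (gram_mat k (\<lambda>a t. A $$ (f a, t)) T)"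
  using fact_mult_det_gram_mat[of T k "\<lambda>a t. A $$ (f a, t)"]
  by (simp add: potential_def minor_def col_minor_def)

lemma potential_nonneg: "potential A k f T \<ge> 0"
  unfolding potential_def by (intro sum_nonneg) auto

lemma potential_eq_0_iff:
  assumes "finite T"
  shows "potential A k f T = 0 \<longleftrightarrow> (\<forall>g. (\<forall>x<k. g x \<in> T) \<longrightarrow> minor A k f g = 0)"
proof -
  have restrict: "minor A k f (restrict g {0..<k}) = minor A k f g" for g
    by (rule minor_cong) auto
  have "potential A k f T = 0 \<longleftrightarrow> (\<forall>g\<in>{0..<k} \<rightarrow>\<^sub>E T. minor A k f g = 0)"
    unfolding potential_def using assms by (subst sum_nonneg_eq_0_iff) (auto intro: finite_PiE)
  also have "\<dots> \<longleftrightarrow> (\<forall>g. (\<forall>x<k. g x \<in> T) \<longrightarrow> minor A k f g = 0)"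
  proof
    assume H: "\<forall>g\<in>{0..<k} \<rightarrow>\<^sub>E T. minor A k f g = 0"
    show "\<forall>g. (\<forall>x<k. g x \<in> T) \<longrightarrow> minor A k f g = 0"
    proof (intro allI impI)
      fix g assume "\<forall>x<k. g x \<in> T"
      hence "restrict g {0..<k} \<in> {0..<k} \<rightarrow>\<^sub>E T" by auto
      thus "minor A k f g = 0" using H restrict by metis
    qed
  qed (auto simp: PiE_iff)
  finally show ?thesis .
qed

lemma potential_pos_iff:
  assumes "finite T"
  shows "potential A k f T > 0 \<longleftrightarrow> (\<exists>g. (\<forall>x<k. g x \<in> T) \<and> minor A k f g \<noteq> 0)"
proof -
  have "potential A k f T > 0 \<longleftrightarrow> potential A k f T \<noteq> 0"
    using potential_nonneg[of A k f T] by linarith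
  thus ?thesis unfolding potential_eq_0_iff[OF assms] by blast
qed

definition nonzero_subdets_ge :: "real mat \<Rightarrow> real \<Rightarrow> bool" where
  "nonzero_subdets_ge A \<delta> \<longleftrightarrow> (\<forall>I J. I \<subseteq> {..<dim_row A} \<longrightarrow> J \<subseteq> {..<dim_col A} \<longrightarrow> I \<noteq> {} \<longrightarrow>
     card I = card J \<longrightarrow> det (submatrix A I J) = 0 \<or> \<delta> \<le> \<bar>det (submatrix A I J)\<bar>)"

lemma abs_minor_ge:
  assumes A: "A \<in> carrier_mat r n" and \<delta>: "nonzero_subdets_ge A \<delta>" and k: "k \<ge> 1"
    and f: "\<forall>x<k. f x < r" and g: "\<forall>x<k. g x < n" and nz: "minor A k f g \<noteq> 0"
  shows "\<bar>minor A k f g\<bar> \<ge> \<delta>"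
proof -
  note inj = minor_nonzero_imp_inj[OF nz]
  let ?S = "submatrix A (f ` {0..<k}) (g ` {0..<k})"
  have "f ` {0..<k} \<subseteq> {..<dim_row A}" "g ` {0..<k} \<subseteq> {..<dim_col A}" "f ` {0..<k} \<noteq> {}"
    "card (f ` {0..<k}) = card (g ` {0..<k})"
    using A f g k inj by (auto simp: card_image)
  hence "det ?S = 0 \<or> \<delta> \<le> \<bar>det ?S\<bar>"
    using \<delta> unfolding nonzero_subdets_ge_def by blast
  moreover have "\<bar>minor A k f g\<bar> = \<bar>det ?S\<bar>"
    by (rule abs_minor_eq_abs_det_submatrix[OF A inj f g])
  ultimately show ?thesis using nz by auto
qed

lemma potential_ge:
  assumes A: "A \<in> carrier_mat r n" and \<delta>: "nonzero_subdets_ge A \<delta>" "\<delta> \<ge> 0" and k: "k \<ge> 1"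
    and f: "\<forall>x<k. f x < r" and T: "T \<subseteq> {..<n}" and pos: "potential A k f T > 0"
  shows "potential A k f T \<ge> \<delta>\<^sup>2"
proof -
  have fin: "finite T" using T finite_subset by blast
  obtain g where g: "\<forall>x<k. g x \<in> T" and nz: "minor A k f g \<noteq> 0"
    using pos potential_pos_iff[OF fin] by blast
  let ?g = "restrict g {0..<k}"
  have g_PiE: "?g \<in> {0..<k} \<rightarrow>\<^sub>E T" using g by simp
  have "\<forall>x<k. g x < n" using g T by blast
  hence "\<delta> \<le> \<bar>minor A k f g\<bar>" by (rule abs_minor_ge[OF A \<delta>(1) k f _ nz])
  hence "\<delta>\<^sup>2 \<le> \<bar>minor A k f g\<bar>\<^sup>2" using \<delta>(2) by (rule power_mono)
  also have "\<dots> = (minor A k f ?g)\<^sup>2" by (simp add: minor_cong[of k f f g ?g])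
  also have "\<dots> \<le> potential A k f T"
    unfolding potential_def by (rule member_le_sum[OF g_PiE]) (simp_all add: fin finite_PiE)
  finally show ?thesis .
qed

lemma one_le_size_bound:
  fixes p :: real assumes "n \<ge> 1" "r \<ge> 1" "p \<ge> 1"
  shows "1 \<le> real n * (real r)\<^sup>2 * p\<^sup>2"
proof -
  have "1 \<le> (real r)\<^sup>2" "1 \<le> p\<^sup>2" using assms by (simp_all add: one_le_power)
  hence "1 \<le> real n * (real r)\<^sup>2" using assms(1) mult_mono[of 1 "real n" 1 "(real r)\<^sup>2"] by simp
  thus ?thesis using \<open>1 \<le> p\<^sup>2\<close> mult_mono[of 1 "real n * (real r)\<^sup>2" 1 "p\<^sup>2"] by simp
qed

lemma potential_le:
  assumes entries: "\<forall>i<r. \<forall>t<n. \<bar>A $$ (i,t)\<bar> \<le> p" and p: "p \<ge> 1" and n: "n \<ge> 1"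
    and k: "1 \<le> k" "k \<le> r" and f: "\<forall>x<k. f x < r" and T: "T \<subseteq> {..<n}"
  shows "potential A k f T \<le> (real n * (real r)\<^sup>2 * p\<^sup>2) ^ r"
proof -
  have fin: "finite T" using T finite_subset by blast
  have "potential A k f T \<le> (\<Sum>g\<in>{0..<k} \<rightarrow>\<^sub>E T. (fact k * p ^ k)\<^sup>2)"
    unfolding potential_def
  proof (rule sum_mono)
    fix g assume "g \<in> {0..<k} \<rightarrow>\<^sub>E T"
    hence "\<bar>minor A k f g\<bar> \<le> fact k * p ^ k"
      unfolding minor_def using entries f T by (intro abs_det_le_fact_mult_power) (auto simp: PiE_iff subset_iff)
    thus "(minor A k f g)\<^sup>2 \<le> (fact k * p ^ k)\<^sup>2"
      by (metis abs_ge_zero power2_abs power_mono)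
  qed
  also have "\<dots> = real (card T) ^ k * (fact k)\<^sup>2 * (p\<^sup>2) ^ k"
    using fin by (simp add: card_PiE power_mult_distrib flip: power_mult) (simp add: mult.commute)
  also have "\<dots> \<le> real n ^ k * ((real k)\<^sup>2) ^ k * (p\<^sup>2) ^ k"
  proof -
    have "real (card T) \<le> real n" using card_mono[OF _ T] by simp
    moreover have "(fact k :: real)\<^sup>2 \<le> ((real k)\<^sup>2) ^ k"
    proof -
      have "(fact k :: real) \<le> real k ^ k" using fact_le_power[of k] by simp
      hence "(fact k :: real)\<^sup>2 \<le> (real k ^ k)\<^sup>2" by (rule power_mono) simp
      thus ?thesis by (simp flip: power_mult add: mult.commute)
    qed
    ultimately show ?thesis
      using p by (intro mult_mono power_mono) (auto simp del: of_nat_fact)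
  qed
  also have "\<dots> = (real n * (real k)\<^sup>2 * p\<^sup>2) ^ k" by (simp add: power_mult_distrib)
  also have "\<dots> \<le> (real n * (real r)\<^sup>2 * p\<^sup>2) ^ k"
    using k by (intro power_mono mult_right_mono mult_left_mono) auto
  also have "\<dots> \<le> (real n * (real r)\<^sup>2 * p\<^sup>2) ^ r"
  proof (rule power_increasing[OF k(2)])
    show "1 \<le> real n * (real r)\<^sup>2 * p\<^sup>2" using n k p by (intro one_le_size_bound) auto
  qed
  finally show ?thesis .
qed

lemma minors_vanish_if_potential_eq_0:
  assumes V: "minors_vanish A r T (Suc k)" and fin: "finite T" and f: "\<forall>x<k. f x < r"
    and pos: "potential A k f T > 0" and sub: "T' \<subseteq> T" and zero: "potential A k f T' = 0"
  shows "minors_vanish A r T' k"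
proof -
  obtain g where g: "\<forall>x<k. g x \<in> T" and nz: "minor A k f g \<noteq> 0"
    using pos potential_pos_iff[OF fin] by blast
  have "finite T'" using sub fin by (rule finite_subset)
  hence "\<forall>g. (\<forall>x<k. g x \<in> T') \<longrightarrow> minor A k f g = 0"
    using zero by (simp only: potential_eq_0_iff)
  thus ?thesis by (intro minors_vanish_if_row_minors_vanish[OF V f g nz sub]) blast
qed

lemma potential_remove_col_le:
  assumes V: "minors_vanish A r T (Suc k)" and fin: "finite T" and f: "\<forall>x<k. f x < r"
    and pos: "potential A k f T > 0" and j: "j \<in> T" and s: "s > 0"
    and high: "(\<Sum>t\<in>T. (\<Sum>i<r. v i * A $$ (i,t))\<^sup>2) < s * (\<Sum>i<r. v i * A $$ (i,j))\<^sup>2"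
  shows "potential A k f (T - {j}) \<le> (1 - 1/s) * potential A k f T"
proof -
  obtain g where g: "\<forall>x<k. g x \<in> T" and nz: "minor A k f g \<noteq> 0"
    using pos potential_pos_iff[OF fin] by blast
  obtain u where u: "\<And>t. t \<in> T \<Longrightarrow> (\<Sum>i<r. v i * A $$ (i,t)) = (\<Sum>l<k. u l * A $$ (f l, t))"
    using row_comb_in_span_of_rows[OF V f g nz] by blast
  let ?B = "\<lambda>a t. A $$ (f a, t)"
  have "det (gram_mat k ?B (T - {j})) \<le> (1 - 1/s) * det (gram_mat k ?B T)"
  proof (rule det_gram_mat_remove_col_le[OF fin j _ s])
    show "det (gram_mat k ?B T) > 0"
      using pos potential_eq_fact_mult_det_gram_mat[OF fin] by (simp add: zero_less_mult_iff)
    show "(\<Sum>t\<in>T. (\<Sum>l<k. u l * ?B l t)\<^sup>2) < s * (\<Sum>l<k. u l * ?B l j)\<^sup>2"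
      using high u j by (simp cong: sum.cong)
  qed
  thus ?thesis
    using fin potential_eq_fact_mult_det_gram_mat[of T] potential_eq_fact_mult_det_gram_mat[of "T - {j}"]
    by (simp add: mult_left_mono mult.left_commute)
qed

section \<open>Pruning columns of high leverage\<close>

text \<open>Every column of \<open>T\<close> has leverage score at most \<open>1/s\<close> in the submatrix of the columns \<open>T\<close>.\<close>
definition leverage_bounded :: "real mat \<Rightarrow> nat \<Rightarrow> nat set \<Rightarrow> real \<Rightarrow> bool" where
  "leverage_bounded A r T s \<longleftrightarrow>
     (\<forall>j\<in>T. \<forall>v. s * (\<Sum>i<r. v i * A $$ (i,j))\<^sup>2 \<le> (\<Sum>t\<in>T. (\<Sum>i<r. v i * A $$ (i,t))\<^sup>2))"

definition prunable :: "real mat \<Rightarrow> nat \<Rightarrow> real \<Rightarrow> nat set \<Rightarrow> nat \<Rightarrow> bool" where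
  "prunable A r s T K \<longleftrightarrow> (\<exists>T'\<subseteq>T. leverage_bounded A r T' s \<and> card (T - T') \<le> K)"

lemma leverage_bounded_imp_prunable: "leverage_bounded A r T s \<Longrightarrow> prunable A r s T K"
  unfolding prunable_def by (intro exI[of _ T]) auto

lemma prunable_mono: "prunable A r s T K \<Longrightarrow> K \<le> K' \<Longrightarrow> prunable A r s T K'"
  unfolding prunable_def by (meson order_trans)

lemma prunable_remove:
  assumes "finite T" "j \<in> T" "prunable A r s (T - {j}) K"
  shows "prunable A r s T (Suc K)"
proof -
  obtain T' where T': "T' \<subseteq> T - {j}" "leverage_bounded A r T' s" "card (T - {j} - T') \<le> K"
    using assms(3) unfolding prunable_def by blast
  have "T - T' = insert j (T - {j} - T')" using T'(1) assms(2) by auto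
  hence "card (T - T') = Suc (card (T - {j} - T'))" using assms(1) by (simp add: card_insert_disjoint)
  thus ?thesis using T' unfolding prunable_def by (intro exI[of _ T']) auto
qed

lemma leverage_bounded_if_minors_vanish_1:
  assumes "minors_vanish A r T 1"
  shows "leverage_bounded A r T s"
  unfolding leverage_bounded_def
proof (intro ballI allI)
  fix j v assume "j \<in> T"
  hence "(\<Sum>i<r. v i * A $$ (i,j)) = 0" using minors_vanish_1_imp_zero[OF assms] by simp
  thus "s * (\<Sum>i<r. v i * A $$ (i,j))\<^sup>2 \<le> (\<Sum>t\<in>T. (\<Sum>i<r. v i * A $$ (i,t))\<^sup>2)"
    by (simp add: sum_nonneg)
qed

text \<open>Each deleted column of high leverage shrinks the potential by the factor \<open>1 - 1/s\<close>, while
  a positive potential is at least \<open>\<delta>\<close>; so within \<open>m\<close> deletions either the leverage becomes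
  bounded or the potential vanishes and the rank drops below \<open>k\<close>.\<close>
lemma prunable_if_potential_small:
  assumes s: "s \<ge> 1" and f: "\<forall>x<k. f x < r"
    and floor: "\<And>T. T \<subseteq> {..<n} \<Longrightarrow> potential A k f T > 0 \<Longrightarrow> potential A k f T \<ge> \<delta>"
    and lower: "\<And>T. T \<subseteq> {..<n} \<Longrightarrow> minors_vanish A r T k \<Longrightarrow> prunable A r s T K"
  shows "T \<subseteq> {..<n} \<Longrightarrow> minors_vanish A r T (Suc k) \<Longrightarrow> potential A k f T > 0 \<Longrightarrow>
    potential A k f T * (1 - 1/s) ^ m < \<delta> \<Longrightarrow> prunable A r s T (m + K)"
proof (induction m arbitrary: T)
  case 0
  thus ?case using floor[OF 0(1,3)] by simp
next
  case (Suc m)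
  note T = Suc.prems(1) and V = Suc.prems(2) and pos = Suc.prems(3)
  have fin: "finite T" using T finite_subset by blast
  show ?case
  proof (cases "leverage_bounded A r T s")
    case True
    thus ?thesis by (rule leverage_bounded_imp_prunable)
  next
    case False
    then obtain j v where j: "j \<in> T"
      and "\<not> s * (\<Sum>i<r. v i * A $$ (i,j))\<^sup>2 \<le> (\<Sum>t\<in>T. (\<Sum>i<r. v i * A $$ (i,t))\<^sup>2)"
      unfolding leverage_bounded_def by blast
    hence high: "(\<Sum>t\<in>T. (\<Sum>i<r. v i * A $$ (i,t))\<^sup>2) < s * (\<Sum>i<r. v i * A $$ (i,j))\<^sup>2"
      by simp
    have dec: "potential A k f (T - {j}) \<le> (1 - 1/s) * potential A k f T"
      by (rule potential_remove_col_le[OF V fin f pos j _ high]) (use s in auto)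
    have "prunable A r s (T - {j}) (m + K)"
    proof (cases "potential A k f (T - {j}) = 0")
      case True
      hence "minors_vanish A r (T - {j}) k"
        by (rule minors_vanish_if_potential_eq_0[OF V fin f pos Diff_subset])
      hence "prunable A r s (T - {j}) K" using lower T by (meson Diff_subset order_trans)
      thus ?thesis by (rule prunable_mono) simp
    next
      case False
      hence pos': "potential A k f (T - {j}) > 0" using potential_nonneg[of A k f "T - {j}"] by linarith
      have "potential A k f (T - {j}) * (1 - 1/s) ^ m \<le> (1 - 1/s) * potential A k f T * (1 - 1/s) ^ m"
        using dec s by (intro mult_right_mono) auto
      also have "\<dots> < \<delta>" using Suc.prems(4) by (simp add: mult_ac)
      finally show ?thesis
        using Suc.IH[OF _ minors_vanish_subset[OF V Diff_subset] pos'] T by blast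
    qed
    thus ?thesis using prunable_remove[OF fin j] by simp
  qed
qed

lemma prunable_if_minors_vanish:
  assumes A: "A \<in> carrier_mat r n" and \<delta>: "nonzero_subdets_ge A \<delta>" "\<delta> \<ge> 0"
    and entries: "\<forall>i<r. \<forall>t<n. \<bar>A $$ (i,t)\<bar> \<le> p" and p: "p \<ge> 1" and s: "s \<ge> 1"
    and N: "(real n * (real r)\<^sup>2 * p\<^sup>2) ^ r * (1 - 1/s) ^ N < \<delta>\<^sup>2"
  shows "k \<le> r \<Longrightarrow> T \<subseteq> {..<n} \<Longrightarrow> minors_vanish A r T (Suc k) \<Longrightarrow> prunable A r s T (k * N)"
proof (induction k arbitrary: T)
  case 0
  thus ?case using leverage_bounded_if_minors_vanish_1 leverage_bounded_imp_prunable by simp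
next
  case (Suc k)
  note kr = Suc.prems(1) and T = Suc.prems(2)
  show ?case
  proof (cases "minors_vanish A r T (Suc k)")
    case True
    thus ?thesis using Suc.IH[OF _ T] kr prunable_mono by simp
  next
    case False
    then obtain f g where f: "\<forall>x<Suc k. f x < r" and g: "\<forall>x<Suc k. g x \<in> T"
      and nz: "minor A (Suc k) f g \<noteq> 0"
      unfolding minors_vanish_def by blast
    have fin: "finite T" using T finite_subset by blast
    have pos: "potential A (Suc k) f T > 0" using potential_pos_iff[OF fin] g nz by blast
    have "n \<ge> 1" using g T by (cases n) auto
    hence "potential A (Suc k) f T \<le> (real n * (real r)\<^sup>2 * p\<^sup>2) ^ r"
      by (intro potential_le[OF entries p _ _ kr f T]) auto
    hence "potential A (Suc k) f T * (1 - 1/s) ^ N \<le> (real n * (real r)\<^sup>2 * p\<^sup>2) ^ r * (1 - 1/s) ^ N"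
      using s by (intro mult_right_mono) auto
    hence small: "potential A (Suc k) f T * (1 - 1/s) ^ N < \<delta>\<^sup>2" using N by linarith
    have "prunable A r s T (N + k * N)"
    proof (rule prunable_if_potential_small[OF s f _ _ T Suc.prems(3) pos small])
      show "potential A (Suc k) f T' \<ge> \<delta>\<^sup>2" if "T' \<subseteq> {..<n}" "potential A (Suc k) f T' > 0" for T'
        using potential_ge[OF A \<delta> _ f that] by simp
      show "prunable A r s T' (k * N)" if "T' \<subseteq> {..<n}" "minors_vanish A r T' (Suc k)" for T'
        using Suc.IH[OF _ that] kr by simp
    qed
    thus ?thesis by simp
  qed
qed

lemma exists_leverage_bounded_subset:
  assumes "A \<in> carrier_mat r n" and "nonzero_subdets_ge A \<delta>" "\<delta> \<ge> 0"
    and "\<forall>i<r. \<forall>t<n. \<bar>A $$ (i,t)\<bar> \<le> p" and "p \<ge> 1" and "s \<ge> 1"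
    and "(real n * (real r)\<^sup>2 * p\<^sup>2) ^ r * (1 - 1/s) ^ N < \<delta>\<^sup>2"
  shows "\<exists>T\<subseteq>{..<n}. leverage_bounded A r T s \<and> card ({..<n} - T) \<le> r * N"
  using prunable_if_minors_vanish[OF assms order.refl order.refl minors_vanish_Suc_rows]
  unfolding prunable_def by blast

section \<open>Leverage scores and the number of deletions\<close>

lemma leverage_ratio_zero_cols_le:
  fixes A :: "real mat" and T :: "nat set"
  assumes A: "A \<in> carrier_mat r n" and T: "T \<subseteq> {..<n}" and lev: "leverage_bounded A r T s"
    and s: "s > 0" and j: "j < n" and v: "v \<in> carrier_vec r"
  defines "M \<equiv> zero_cols A ({..<n} - T)"
  shows "(v \<bullet> col M j)\<^sup>2 / ((transpose_mat M *\<^sub>v v) \<bullet> (transpose_mat M *\<^sub>v v)) \<le> 1 / s"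
proof -
  have dims: "dim_row M = r" "dim_col M = n" using A by (auto simp: M_def zero_cols_def)
  have M_index: "M $$ (i,t) = (if t \<in> T then A $$ (i,t) else 0)" if "i < r" "t < n" for i t
    using that A T by (auto simp: M_def zero_cols_def)
  define w where "w t = (\<Sum>i<r. v $ i * A $$ (i,t))" for t
  have col: "col M t \<bullet> v = (if t \<in> T then w t else 0)" if t: "t < n" for t
  proof -
    have "col M t \<bullet> v = (\<Sum>i<r. M $$ (i,t) * v $ i)"
      using t v dims by (simp add: scalar_prod_def atLeast0LessThan)
    also have "\<dots> = (if t \<in> T then w t else 0)"
      using t by (auto simp: M_index w_def mult.commute intro: sum.neutral)
    finally show ?thesis .
  qed
  have "(transpose_mat M *\<^sub>v v) \<bullet> (transpose_mat M *\<^sub>v v) = (\<Sum>t<n. ((transpose_mat M *\<^sub>v v) $ t)\<^sup>2)"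
    unfolding scalar_prod_def by (simp add: dims atLeast0LessThan power2_eq_square)
  also have "\<dots> = (\<Sum>t<n. (if t \<in> T then w t else 0)\<^sup>2)"
    by (intro sum.cong refl) (simp add: dims col)
  also have "\<dots> = (\<Sum>t\<in>{..<n} \<inter> T. (w t)\<^sup>2)"
    by (simp add: sum.inter_restrict if_distrib[of "\<lambda>x. x\<^sup>2"] cong: if_cong)
  also have "{..<n} \<inter> T = T" using T by blast
  finally have norm: "(transpose_mat M *\<^sub>v v) \<bullet> (transpose_mat M *\<^sub>v v) = (\<Sum>t\<in>T. (w t)\<^sup>2)" .
  have "v \<bullet> col M j = col M j \<bullet> v" using v dims by (intro comm_scalar_prod[of _ r]) auto
  hence vcol: "v \<bullet> col M j = (if j \<in> T then w j else 0)" using col[OF j] by simp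
  show ?thesis
  proof (cases "j \<in> T \<and> (\<Sum>t\<in>T. (w t)\<^sup>2) \<noteq> 0")
    case True
    moreover have "(\<Sum>t\<in>T. (w t)\<^sup>2) \<ge> 0" by (intro sum_nonneg) auto
    ultimately have "(\<Sum>t\<in>T. (w t)\<^sup>2) > 0" by linarith
    moreover have "s * (w j)\<^sup>2 \<le> (\<Sum>t\<in>T. (w t)\<^sup>2)"
      using lev True unfolding leverage_bounded_def w_def by (simp add: Ball_def)
    ultimately have "(w j)\<^sup>2 / (\<Sum>t\<in>T. (w t)\<^sup>2) \<le> 1 / s"
      using s by (simp add: divide_le_eq pos_le_divide_eq mult.commute)
    thus ?thesis using True by (simp add: vcol norm)
  next
    case False
    \<comment> \<open>this includes a vanishing denominator, as \<open>x / 0 = 0\<close>\<close>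
    thus ?thesis using s by (auto simp: vcol norm)
  qed
qed

lemma leverage_score_zero_cols_le:
  assumes A: "A \<in> carrier_mat r n" and T: "T \<subseteq> {..<n}" and lev: "leverage_bounded A r T s"
    and s: "s > 0" and j: "j < n"
  shows "leverage_score (zero_cols A ({..<n} - T)) j \<le> 1 / s"
proof -
  define M where "M = zero_cols A ({..<n} - T)"
  have dims: "dim_row M = r" "dim_col M = n" using A by (auto simp: M_def zero_cols_def)
  define X where "X = {(v \<bullet> col M j)\<^sup>2 / ((transpose_mat M *\<^sub>v v) \<bullet> (transpose_mat M *\<^sub>v v)) | v.
    v \<in> carrier_vec r \<and> transpose_mat M *\<^sub>v v \<noteq> 0\<^sub>v n}"
  have "Sup X \<le> 1 / s" if "X \<noteq> {}"
    using that leverage_ratio_zero_cols_le[OF A T lev s j] by (intro cSup_least) (auto simp: X_def M_def)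
  moreover have "X \<noteq> {}" if "\<exists>v\<in>carrier_vec r. transpose_mat M *\<^sub>v v \<noteq> 0\<^sub>v n"
    using that by (auto simp: X_def)
  ultimately show ?thesis
    using s unfolding M_def[symmetric] leverage_score_def dims X_def[symmetric] by auto
qed

lemma one_minus_inverse_power_less:
  fixes s R :: real
  assumes s: "s \<ge> 1" and R: "R > 0"
  shows "(1 - 1/s) ^ (nat \<lceil>s * ln R\<rceil> + 1) < 1 / R"
proof -
  define N where "N = nat \<lceil>s * ln R\<rceil> + 1"
  have "(1 - 1/s) ^ N \<le> exp (- (1/s)) ^ N"
    using exp_ge_add_one_self[of "- (1/s)"] s by (intro power_mono) auto
  also have "\<dots> = exp (- (real N / s))" by (simp flip: exp_of_nat_mult)
  also have "\<dots> < exp (- ln R)"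
  proof -
    have "s * ln R < real N" unfolding N_def by linarith
    hence "ln R < real N / s" using s by (simp add: field_simps)
    thus ?thesis by simp
  qed
  also have "\<dots> = 1 / R" using R by (simp add: exp_minus inverse_eq_divide)
  finally show ?thesis unfolding N_def .
qed

lemma mult_one_minus_inverse_power_less:
  fixes U p s :: real
  assumes U: "U \<ge> 0" and p: "p > 0" and s: "s \<ge> 1"
  shows "U * (1 - 1/s) ^ (nat \<lceil>s * ln (U * p\<^sup>2)\<rceil> + 1) < (1/p)\<^sup>2"
proof (cases "U = 0")
  case True
  thus ?thesis using p by simp
next
  case False
  hence "U * p\<^sup>2 > 0" using U p by simp
  hence "U * (1 - 1/s) ^ (nat \<lceil>s * ln (U * p\<^sup>2)\<rceil> + 1) < U * (1 / (U * p\<^sup>2))"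
    using one_minus_inverse_power_less[OF s] U False by (intro mult_strict_left_mono) auto
  thus ?thesis using False by (simp add: power_divide)
qed

lemma ln_potential_bound_le:
  fixes n r d :: nat and p c :: real
  assumes n: "n \<ge> 1" and r: "r \<ge> 1" and p: "1 \<le> p" "p \<le> c * real r ^ d" and c: "c \<ge> 1"
  shows "ln ((real n * (real r)\<^sup>2 * p\<^sup>2) ^ r * p\<^sup>2) \<le>
    real r * (2 + 4 * real d + 4 * ln c) * (1 + ln (real n * real r))"
proof -
  define a b e q where "a = ln (real n)" and "b = ln (real r)" and "e = ln c" and "q = ln p"
  have nonneg: "a \<ge> 0" "b \<ge> 0" "e \<ge> 0" "q \<ge> 0" using n r c p by (auto simp: a_def b_def e_def q_def)
  have "q \<le> ln (c * real r ^ d)" unfolding q_def using p c r by (subst ln_le_cancel_iff) auto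
  also have "\<dots> = e + real d * b" using c r by (simp add: e_def b_def ln_mult ln_realpow)
  finally have q: "q \<le> e + real d * b" .
  have "ln ((real n * (real r)\<^sup>2 * p\<^sup>2) ^ r * p\<^sup>2) = real r * (a + 2 * b + 2 * q) + 2 * q"
    using n r p by (simp add: ln_mult ln_realpow a_def b_def q_def)
  also have "\<dots> \<le> real r * (a + 2 * b + 4 * q)"
    using mult_right_mono[of 1 "real r" q] r nonneg by (simp add: algebra_simps)
  also have "\<dots> \<le> real r * ((2 + 4 * real d + 4 * e) * (1 + a + b))"
  proof (rule mult_left_mono)
    have "(2 + 4 * real d + 4 * e) * (1 + a + b) =
        2 + 4 * real d + 4 * e + 2 * a + 4 * (real d * a) + 4 * (e * a) + 2 * b + 4 * (real d * b) + 4 * (e * b)"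
      by (simp add: algebra_simps)
    moreover have "0 \<le> real d * a" "0 \<le> e * a" "0 \<le> e * b" using nonneg by simp_all
    ultimately show "a + 2 * b + 4 * q \<le> (2 + 4 * real d + 4 * e) * (1 + a + b)"
      using q nonneg by linarith
  qed simp
  also have "1 + a + b = 1 + ln (real n * real r)" using n r by (simp add: a_def b_def ln_mult)
  finally show ?thesis by (simp add: e_def mult.assoc)
qed

lemma mult_Suc_nat_ceiling_le:
  fixes L K l s :: real and r :: nat
  assumes r: "r \<ge> 1" and s: "s \<ge> 1" and L: "0 \<le> L" "L \<le> real r * K * (1 + l)" and l: "l \<ge> 0"
  shows "real (r * (nat \<lceil>s * L\<rceil> + 1)) \<le> (K + 2) * (real r)\<^sup>2 * s * (1 + l)"
proof -
  have "0 \<le> s * L" using s L by simp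
  hence "real (nat \<lceil>s * L\<rceil>) = of_int \<lceil>s * L\<rceil>" by simp
  also have "\<dots> \<le> s * L + 1" by linarith
  finally have "real (nat \<lceil>s * L\<rceil> + 1) \<le> s * L + 2" by simp
  hence "real (r * (nat \<lceil>s * L\<rceil> + 1)) \<le> real r * (s * L + 2)"
    unfolding of_nat_mult by (rule mult_left_mono) simp
  moreover have "real r * (s * L) \<le> real r * (s * (real r * K * (1 + l)))"
    using s L by (intro mult_left_mono) auto
  moreover have "real r \<le> (real r)\<^sup>2 * s * (1 + l)"
  proof -
    have "1 \<le> real r * s" using r s mult_mono[of 1 "real r" 1 s] by simp
    hence "1 \<le> real r * s * (1 + l)" using l mult_mono[of 1 "real r * s" 1 "1 + l"] by simp
    hence "real r * 1 \<le> real r * (real r * s * (1 + l))" by (intro mult_left_mono) auto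
    thus ?thesis by (simp add: power2_eq_square mult_ac)
  qed
  moreover have "(K + 2) * (real r)\<^sup>2 * s * (1 + l) =
      real r * (s * (real r * K * (1 + l))) + 2 * ((real r)\<^sup>2 * s * (1 + l))"
    by (simp add: power2_eq_square algebra_simps)
  ultimately show ?thesis by (simp add: algebra_simps)
qed

lemma exists_leverage_bounded_subset_card_le:
  assumes A: "A \<in> carrier_mat r n" and subdets: "nonzero_subdets_ge A (1/p)"
    and entries: "\<forall>i<r. \<forall>t<n. \<bar>A $$ (i,t)\<bar> \<le> p" and p: "p \<ge> 1" and s: "s \<ge> 1"
  shows "\<exists>T\<subseteq>{..<n}. leverage_bounded A r T s \<and>
    card ({..<n} - T) \<le> r * (nat \<lceil>s * ln ((real n * (real r)\<^sup>2 * p\<^sup>2) ^ r * p\<^sup>2)\<rceil> + 1)"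
proof (rule exists_leverage_bounded_subset[OF A subdets _ entries p s])
  show "(real n * (real r)\<^sup>2 * p\<^sup>2) ^ r *
      (1 - 1/s) ^ (nat \<lceil>s * ln ((real n * (real r)\<^sup>2 * p\<^sup>2) ^ r * p\<^sup>2)\<rceil> + 1) < (1/p)\<^sup>2"
    using p s by (intro mult_one_minus_inverse_power_less) auto
qed (use p in simp)

lemma real_card_le_leverage_bound:
  fixes p c s :: real
  assumes card: "card S \<le> r * (nat \<lceil>s * ln ((real n * (real r)\<^sup>2 * p\<^sup>2) ^ r * p\<^sup>2)\<rceil> + 1)"
    and S: "S \<subseteq> {..<n}" and s: "s \<ge> 1" and p: "1 \<le> p" "p \<le> max (c * real r ^ d) 1" and c: "c \<ge> 1"
  shows "real (card S) \<le> (4 + 4 * real d + 4 * ln c) * (real r)\<^sup>2 * s * (1 + ln (real n * real r))"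
proof (cases "r = 0 \<or> n = 0")
  case True
  hence "real (card S) = 0" using card S by auto
  moreover have "0 \<le> (4 + 4 * real d + 4 * ln c) * (real r)\<^sup>2 * s * (1 + ln (real n * real r))"
    using True c s by auto
  ultimately show ?thesis by linarith
next
  case False
  let ?L = "ln ((real n * (real r)\<^sup>2 * p\<^sup>2) ^ r * p\<^sup>2)"
  have "1 \<le> c * real r ^ d" using False c mult_mono[of 1 c 1 "real r ^ d"] by simp
  hence "?L \<le> real r * (2 + 4 * real d + 4 * ln c) * (1 + ln (real n * real r))"
    using False p c by (intro ln_potential_bound_le) auto
  moreover have "?L \<ge> 0"
  proof -
    have "1 \<le> (real n * (real r)\<^sup>2 * p\<^sup>2) ^ r" using False p by (simp add: one_le_size_bound one_le_power)
    moreover have "1 \<le> p\<^sup>2" using p by (simp add: one_le_power)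
    ultimately show ?thesis using mult_mono[of 1 _ 1 "p\<^sup>2"] by simp
  qed
  moreover have "ln (real n * real r) \<ge> 0"
  proof -
    have "1 \<le> n * r" using False by (simp add: Suc_le_eq)
    hence "1 \<le> real n * real r" by (metis of_nat_1 of_nat_le_iff of_nat_mult)
    thus ?thesis by simp
  qed
  ultimately have "real (r * (nat \<lceil>s * ?L\<rceil> + 1)) \<le>
      ((2 + 4 * real d + 4 * ln c) + 2) * (real r)\<^sup>2 * s * (1 + ln (real n * real r))"
    using False s by (intro mult_Suc_nat_ceiling_le) auto
  also have "(2 + 4 * real d + 4 * ln c) + 2 = 4 + 4 * real d + 4 * ln c" by simp
  finally show ?thesis using card by (meson of_nat_le_iff order.trans)
qed

lemma abs_entries_le_max:
  fixes A :: "real mat"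
  assumes "\<forall>i<r. \<forall>j<n. A $$ (i,j) \<noteq> 0 \<longrightarrow> \<bar>A $$ (i,j)\<bar> \<le> b"
  shows "\<forall>i<r. \<forall>j<n. \<bar>A $$ (i,j)\<bar> \<le> max b 1"
proof (intro allI impI)
  fix i j assume "i < r" "j < n"
  thus "\<bar>A $$ (i,j)\<bar> \<le> max b 1"
    using assms by (cases "A $$ (i,j) = 0") (simp_all add: le_max_iff_disj)
qed

lemma nonzero_subdets_ge_inverse_max:
  assumes A: "A \<in> carrier_mat r n" and c: "c > 0"
    and subdets: "\<forall>I J. I \<subseteq> {..<r} \<longrightarrow> J \<subseteq> {..<n} \<longrightarrow> I \<noteq> {} \<longrightarrow> card I = card J \<longrightarrow>
      det (submatrix A I J) = 0 \<or> \<bar>det (submatrix A I J)\<bar> \<ge> 1 / (c * real r ^ d)"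
  shows "nonzero_subdets_ge A (1 / max (c * real r ^ d) 1)"
  unfolding nonzero_subdets_ge_def
proof (intro allI impI)
  fix I J assume IJ: "I \<subseteq> {..<dim_row A}" "J \<subseteq> {..<dim_col A}" "I \<noteq> {}" "card I = card J"
  hence "r > 0" using A by auto
  hence "1 / max (c * real r ^ d) 1 \<le> 1 / (c * real r ^ d)"
    using c by (intro divide_left_mono) auto
  moreover have "I \<subseteq> {..<r}" "J \<subseteq> {..<n}" using IJ A by auto
  hence "det (submatrix A I J) = 0 \<or> 1 / (c * real r ^ d) \<le> \<bar>det (submatrix A I J)\<bar>"
    using subdets IJ(3,4) by blast
  ultimately show "det (submatrix A I J) = 0 \<or> 1 / max (c * real r ^ d) 1 \<le> \<bar>det (submatrix A I J)\<bar>"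
    by linarith
qed

theorem mainTheorem14:
  fixes c :: real and d :: nat
  assumes "c > 0"
  shows "\<exists>C :: real. C > 0 \<and>
    (\<forall>(r::nat) (n::nat) (A::real mat) (s::real).
       A \<in> carrier_mat r n \<longrightarrow>
       (\<forall>i<r. \<forall>j<n. A $$ (i,j) \<noteq> 0 \<longrightarrow> \<bar>A $$ (i,j)\<bar> \<le> c * real r ^ d) \<longrightarrow>
       (\<forall>I J. I \<subseteq> {..<r} \<longrightarrow> J \<subseteq> {..<n} \<longrightarrow> I \<noteq> {} \<longrightarrow> card I = card J \<longrightarrow>
           det (submatrix A I J) = 0 \<or> \<bar>det (submatrix A I J)\<bar> \<ge> 1 / (c * real r ^ d)) \<longrightarrow>
       s \<ge> 1 \<longrightarrow>
       (\<exists>S. S \<subseteq> {..<n} \<and>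
            real (card S) \<le> C * (real r)\<^sup>2 * s * (1 + ln (real n * real r)) \<and>
            (\<forall>j<n. leverage_score (zero_cols A S) j \<le> 1 / s)))"
proof -
  define c' where "c' = max c 1"
  have c': "c' \<ge> 1" "c \<le> c'" by (simp_all add: c'_def)
  show ?thesis
  proof (intro exI[of _ "4 + 4 * real d + 4 * ln c'"] conjI allI impI)
    show "4 + 4 * real d + 4 * ln c' > 0" using c' by (simp add: add_pos_nonneg)
  next
    fix r n :: nat and A :: "real mat" and s :: real
    assume A: "A \<in> carrier_mat r n"
      and entries: "\<forall>i<r. \<forall>j<n. A $$ (i,j) \<noteq> 0 \<longrightarrow> \<bar>A $$ (i,j)\<bar> \<le> c * real r ^ d"
      and subdets: "\<forall>I J. I \<subseteq> {..<r} \<longrightarrow> J \<subseteq> {..<n} \<longrightarrow> I \<noteq> {} \<longrightarrow> card I = card J \<longrightarrow>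
           det (submatrix A I J) = 0 \<or> \<bar>det (submatrix A I J)\<bar> \<ge> 1 / (c * real r ^ d)"
      and s: "s \<ge> 1"
    let ?p = "max (c * real r ^ d) 1"
    have "c * real r ^ d \<le> c' * real r ^ d" using c'(2) by (rule mult_right_mono) simp
    hence p: "1 \<le> ?p" "?p \<le> max (c' * real r ^ d) 1" by (simp_all add: max.mono)
    obtain T where T: "T \<subseteq> {..<n}" "leverage_bounded A r T s"
      and card: "card ({..<n} - T) \<le> r * (nat \<lceil>s * ln ((real n * (real r)\<^sup>2 * ?p\<^sup>2) ^ r * ?p\<^sup>2)\<rceil> + 1)"
      using exists_leverage_bounded_subset_card_le[OF A nonzero_subdets_ge_inverse_max[OF A \<open>c > 0\<close> subdets]
          abs_entries_le_max[OF entries] p(1) s]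
      by blast
    show "\<exists>S. S \<subseteq> {..<n} \<and>
        real (card S) \<le> (4 + 4 * real d + 4 * ln c') * (real r)\<^sup>2 * s * (1 + ln (real n * real r)) \<and>
        (\<forall>j<n. leverage_score (zero_cols A S) j \<le> 1 / s)"
      using real_card_le_leverage_bound[OF card _ s p c'(1)] leverage_score_zero_cols_le[OF A T] s
      by (intro exI[of _ "{..<n} - T"]) auto
  qed
qed

end
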